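(* For integers $1\le p\le m$, the real-analytic function on $\mathbb B^m$ $$\phi_p(w)=\frac{1}{(1-\|w\|^2)^{2p}}\det\big((1-\|w\|^2)\delta_{st}+\overline{w_s}w_t\big)_{1\le s,t\le p}$$ does not lie in the Umehara algebra $\Lambda(\mathbb B^m)$.
   Context: $\mathbb B^m=\{w\in\mathbb C^m:\|w\|^2=\sum|w_j|^2<1\}$. For a complex manifold $X$, the Umehara algebra $\Lambda(X)$ is the associative algebra of real-analytic functions on $X$ consisting of real linear combinations of functions $f\bar g+g\bar f$ with $f,g$ holomorphic on $X$. *)

theory Defs
  imports "HOL-Analysis.Analysis"
begin

text \<open>Points of C^m are vectors of type complex^'m (m = CARD('m)); the norm on
  complex^'m is the Euclidean one, so ball 0 1 is the unit ball B^m.\<close>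

definition holomorphic_several :: "(complex^'m \<Rightarrow> complex) \<Rightarrow> (complex^'m) set \<Rightarrow> bool" where
  "holomorphic_several f S \<longleftrightarrow>
     (\<forall>w\<in>S. \<exists>L. (f has_derivative L) (at w) \<and> (\<forall>c v. L (c *s v) = c * L v))"

definition umehara_algebra :: "(complex^'m) set \<Rightarrow> (complex^'m \<Rightarrow> complex) set" where
  "umehara_algebra X = {h. \<exists>(n::nat) (c::nat \<Rightarrow> real) f g.
       (\<forall>k<n. holomorphic_several (f k) X \<and> holomorphic_several (g k) X) \<and>
       (\<forall>w\<in>X. h w = (\<Sum>k<n. of_real (c k) *
            (f k w * cnj (g k w) + g k w * cnj (f k w))))}"

definition det_on :: "'a set \<Rightarrow> ('a \<Rightarrow> 'a \<Rightarrow> complex) \<Rightarrow> complex" where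
  "det_on P A = (\<Sum>\<pi>\<in>{\<pi>. \<pi> permutes P}. of_int (sign \<pi>) * (\<Prod>i\<in>P. A i (\<pi> i)))"

definition phi :: "'m set \<Rightarrow> complex^'m \<Rightarrow> complex" where
  "phi P w = (let r = 1 - (norm w)\<^sup>2 in
     1 / (complex_of_real r) ^ (2 * card P) *
     det_on P (\<lambda>s t. complex_of_real r * (if s = t then 1 else 0) + cnj (w $ s) * w $ t))"

end

theory Submission
  imports Defs "HOL-Complex_Analysis.Complex_Analysis" "Jordan_Normal_Form.Determinant"
begin

text \<open>Along the coordinate axis through an index \<open>s \<in> P\<close>, \<open>phi P\<close> becomes
  \<open>(1 - |z|\<^sup>2)\<^sup>-\<^sup>q\<close> with \<open>q = p + 1\<close>, while every element of the Umehara algebra restricts to a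
  finite sum \<open>\<Sum>x. A x z * cnj (B x z)\<close> with \<open>A x\<close>, \<open>B x\<close> holomorphic on the disc.
  Multiplying such an identity by \<open>(1 - z * cnj z)\<^sup>q\<close> gives a finite sum of the same shape
  that is constant; differentiating separately in \<open>z\<close> and \<open>cnj z\<close> shows that its sums of
  products of Taylor coefficients vanish away from the origin. Undoing the multiplication on
  coefficients, the matrix \<open>C i j = \<Sum>x. \<alpha>\<^sub>x i * cnj (\<beta>\<^sub>x j)\<close> of Taylor coefficients of the \<open>A x\<close>
  and \<open>B x\<close> is diagonal with the nonzero entries \<open>(q - 1 + i) choose i\<close>. But it factors through
  the finite index set, so its rank is bounded by the number of summands: a contradiction.\<close>

section \<open>Sesquiholomorphic sums\<close>

lemma has_derivative_times_cnj:
  assumes "(f has_field_derivative f') (at z)" "(g has_field_derivative g') (at z)"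
  shows "((\<lambda>w. f w * cnj (g w)) has_derivative (\<lambda>v. f z * cnj (g' * v) + f' * v * cnj (g z))) (at z)"
  using has_derivative_mult[OF assms(1)[unfolded has_field_derivative_def]
      has_derivative_cnj[OF assms(2)[unfolded has_field_derivative_def]]]
  by simp

lemma sesqui_sum_const_imp_deriv_sums_zero:
  fixes F G :: "'a \<Rightarrow> complex \<Rightarrow> complex"
  assumes S: "open S" and z: "z \<in> S"
    and holo: "\<And>x. x \<in> I \<Longrightarrow> F x holomorphic_on S \<and> G x holomorphic_on S"
    and const: "\<And>w. w \<in> S \<Longrightarrow> (\<Sum>x\<in>I. F x w * cnj (G x w)) = c"
  shows "(\<Sum>x\<in>I. deriv (F x) z * cnj (G x z)) = 0"
    and "(\<Sum>x\<in>I. F x z * cnj (deriv (G x) z)) = 0"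
proof -
  define X where "X = (\<Sum>x\<in>I. deriv (F x) z * cnj (G x z))"
  define Y where "Y = (\<Sum>x\<in>I. F x z * cnj (deriv (G x) z))"
  have "((\<lambda>w. \<Sum>x\<in>I. F x w * cnj (G x w)) has_derivative
          (\<lambda>v. \<Sum>x\<in>I. F x z * cnj (deriv (G x) z * v) + deriv (F x) z * v * cnj (G x z))) (at z)"
    using holo S z by (intro has_derivative_sum has_derivative_times_cnj holomorphic_derivI) auto
  then have "((\<lambda>w. \<Sum>x\<in>I. F x w * cnj (G x w)) has_derivative (\<lambda>v. v * X + cnj v * Y)) (at z)"
    by (rule has_derivative_eq_rhs) (simp add: X_def Y_def sum.distrib sum_distrib_left algebra_simps)
  moreover have "((\<lambda>w. \<Sum>x\<in>I. F x w * cnj (G x w)) has_derivative (\<lambda>v. 0)) (at z)"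
    by (rule has_derivative_transform_within_open[OF has_derivative_const S z]) (use const in auto)
  ultimately have L0: "(\<lambda>v. v * X + cnj v * Y) = (\<lambda>v. 0)"
    by (rule has_derivative_unique)
  txt \<open>Testing the real-linear map with \<open>v = 1\<close> and \<open>v = \<i>\<close> separates \<open>X\<close> from \<open>Y\<close>.\<close>
  have "X + Y = 0" using fun_cong[OF L0, of 1] by simp
  moreover have "\<i> * (X - Y) = 0" using fun_cong[OF L0, of \<i>] by (simp add: algebra_simps)
  ultimately have "X = 0 \<and> Y = 0" by simp
  then show "X = 0" "Y = 0" unfolding X_def Y_def by auto
qed

lemma sesqui_sum_const_imp_higher_deriv_sums:
  fixes F G :: "'a \<Rightarrow> complex \<Rightarrow> complex"
  assumes S: "open S" and z: "z \<in> S"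
    and holo: "\<And>x. x \<in> I \<Longrightarrow> F x holomorphic_on S \<and> G x holomorphic_on S"
    and const: "\<And>w. w \<in> S \<Longrightarrow> (\<Sum>x\<in>I. F x w * cnj (G x w)) = c"
  shows "(\<Sum>x\<in>I. (deriv ^^ i) (F x) z * cnj ((deriv ^^ j) (G x) z)) = (if i = 0 \<and> j = 0 then c else 0)"
proof -
  have holo': "(deriv ^^ i) (F x) holomorphic_on S \<and> (deriv ^^ j) (G x) holomorphic_on S"
    if "x \<in> I" for x i j
    using holo[OF that] S by (simp add: holomorphic_higher_deriv)
  have j_induct: "\<forall>w\<in>S. (\<Sum>x\<in>I. F x w * cnj ((deriv ^^ j) (G x) w)) = (if j = 0 then c else 0)" for j
  proof (induction j)
    case (Suc j)
    have "(\<Sum>x\<in>I. F x w * cnj (deriv ((deriv ^^ j) (G x)) w)) = 0" if "w \<in> S" for w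
      by (rule sesqui_sum_const_imp_deriv_sums_zero(2)[where G = "\<lambda>x. (deriv ^^ j) (G x)"
            and c = "if j = 0 then c else 0", OF S that]) (use holo'[of _ 0 j] Suc.IH in auto)
    then show ?case by simp
  qed (use const in simp)
  have "\<forall>w\<in>S. (\<Sum>x\<in>I. (deriv ^^ i) (F x) w * cnj ((deriv ^^ j) (G x) w)) = (if i = 0 \<and> j = 0 then c else 0)"
  proof (induction i)
    case (Suc i)
    have "(\<Sum>x\<in>I. deriv ((deriv ^^ i) (F x)) w * cnj ((deriv ^^ j) (G x) w)) = 0" if "w \<in> S" for w
      by (rule sesqui_sum_const_imp_deriv_sums_zero(1)[where F = "\<lambda>x. (deriv ^^ i) (F x)"
            and G = "\<lambda>x. (deriv ^^ j) (G x)" and c = "if i = 0 \<and> j = 0 then c else 0", OF S that])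
         (use holo' Suc.IH in auto)
    then show ?case by simp
  qed (use j_induct in simp)
  then show ?thesis using z by blast
qed

lemma sesqui_sum_const_imp_fps_coeff_sums:
  fixes F G :: "'a \<Rightarrow> complex \<Rightarrow> complex"
  assumes "open S" "0 \<in> S"
    and "\<And>x. x \<in> I \<Longrightarrow> F x holomorphic_on S \<and> G x holomorphic_on S"
    and "\<And>w. w \<in> S \<Longrightarrow> (\<Sum>x\<in>I. F x w * cnj (G x w)) = c"
  shows "(\<Sum>x\<in>I. fps_nth (fps_expansion (F x) 0) i * cnj (fps_nth (fps_expansion (G x) 0) j))
       = (if i = 0 \<and> j = 0 then c else 0)"
proof -
  have "(\<Sum>x\<in>I. fps_nth (fps_expansion (F x) 0) i * cnj (fps_nth (fps_expansion (G x) 0) j))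
      = (\<Sum>x\<in>I. (deriv ^^ i) (F x) 0 * cnj ((deriv ^^ j) (G x) 0)) / (fact i * fact j)"
    by (simp add: fps_expansion_def sum_divide_distrib)
  then show ?thesis
    using sesqui_sum_const_imp_higher_deriv_sums[OF assms(1,2,3,4)] by simp
qed

section \<open>A binomial deconvolution\<close>

text \<open>The coefficient array of \<open>(\<Sum>a\<le>q. k a * (z * cnj z) ^ a) * (\<Sum>i j. C i j * z ^ i * cnj z ^ j)\<close>.\<close>
definition diagonal_convolution ::
    "(nat \<Rightarrow> 'a::comm_ring_1) \<Rightarrow> nat \<Rightarrow> (nat \<Rightarrow> nat \<Rightarrow> 'a) \<Rightarrow> nat \<Rightarrow> nat \<Rightarrow> 'a" where
  "diagonal_convolution k q C i j = (\<Sum>a\<le>q. k a * (if a \<le> i \<and> a \<le> j then C (i - a) (j - a) else 0))"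

lemma diagonal_convolution_inject:
  fixes k :: "nat \<Rightarrow> 'a::idom"
  assumes "k 0 \<noteq> 0" and "diagonal_convolution k q C = diagonal_convolution k q D"
  shows "C = D"
proof -
  have split: "diagonal_convolution k q E i j
      = k 0 * E i j + (\<Sum>a\<in>{1..q}. k a * (if a \<le> i \<and> a \<le> j then E (i - a) (j - a) else 0))"
    for E i j by (simp add: diagonal_convolution_def atMost_atLeast0 sum.atLeast_Suc_atMost)
  have "C i j = D i j" for i j
  proof (induction i arbitrary: j rule: less_induct)
    case (less i)
    have "(\<Sum>a\<in>{1..q}. k a * (if a \<le> i \<and> a \<le> j then C (i - a) (j - a) else 0))
        = (\<Sum>a\<in>{1..q}. k a * (if a \<le> i \<and> a \<le> j then D (i - a) (j - a) else 0))"
      using less.IH by (intro sum.cong) auto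
    moreover have "diagonal_convolution k q C i j = diagonal_convolution k q D i j"
      using assms(2) by simp
    ultimately have "k 0 * C i j = k 0 * D i j" unfolding split by simp
    then show ?case using assms(1) by simp
  qed
  then show ?thesis by blast
qed

lemma alternating_binomial_convolution:
  fixes q i :: nat
  assumes "q \<ge> 1"
  shows "(\<Sum>a\<le>q. (-1) ^ a * of_nat (q choose a) *
            (if a \<le> i then of_nat ((q - 1 + (i - a)) choose (i - a)) else 0) :: complex)
       = (if i = 0 then 1 else 0)"
proof -
  txt \<open>Coefficient \<open>i\<close> of \<open>(1 - x)\<^sup>q * (1 - x)\<^sup>-\<^sup>q = 1\<close>: the multichoose numbers are, up to sign,
    the coefficients \<open>(- q) gchoose n\<close>, so Vandermonde's identity applies.\<close>
  define g where "g a = (of_nat q gchoose a) * ((- of_nat q) gchoose (i - a) :: complex)" for a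
  have multichoose: "of_nat ((q - 1 + (i - a)) choose (i - a))
      = (-1) ^ (i - a) * ((- of_nat q) gchoose (i - a) :: complex)" for a
  proof -
    have "of_nat ((q - 1 + (i - a)) choose (i - a)) = ((of_nat (q - 1) + of_nat (i - a)) gchoose (i - a) :: complex)"
      by (simp add: binomial_gbinomial)
    also have "\<dots> = (-1) ^ (i - a) * (- (of_nat (q - 1) + 1) gchoose (i - a))"
      by (rule gbinomial_minus')
    also have "of_nat (q - 1) + 1 = (of_nat q :: complex)"
      using assms by simp
    finally show ?thesis .
  qed
  have summand: "(-1) ^ a * of_nat (q choose a) * (if a \<le> i then of_nat ((q - 1 + (i - a)) choose (i - a)) else 0)
        = (if a \<le> i then (-1) ^ i * g a else 0 :: complex)" for a
  proof (cases "a \<le> i")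
    case True
    have "(-1) ^ a * of_nat (q choose a) * (if a \<le> i then of_nat ((q - 1 + (i - a)) choose (i - a)) else 0)
        = ((-1) ^ a * (-1) ^ (i - a)) * g a"
      unfolding g_def multichoose by (simp only: True if_True binomial_gbinomial mult_ac)
    also have "(-1) ^ a * (-1) ^ (i - a) = ((-1) ^ i :: complex)"
      using True by (metis le_add_diff_inverse power_add)
    finally show ?thesis using True by simp
  qed simp
  have "(\<Sum>a\<le>q. (-1) ^ a * of_nat (q choose a) *
            (if a \<le> i then of_nat ((q - 1 + (i - a)) choose (i - a)) else 0) :: complex)
      = (\<Sum>a\<le>q + i. if a \<le> i then (-1) ^ i * g a else 0)"
    unfolding summand by (rule sum.mono_neutral_left)
      (auto simp: g_def binomial_gbinomial[symmetric])
  also have "\<dots> = (-1) ^ i * (\<Sum>a\<in>{0..i}. g a)"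
    by (subst sum.mono_neutral_cong_right[of "{..q + i}" "{0..i}"]) (auto simp: sum_distrib_left)
  also have "\<dots> = (-1) ^ i * (0 gchoose i)"
    unfolding g_def by (subst gbinomial_Vandermonde) simp
  also have "\<dots> = (if i = 0 then 1 else 0)"
    by (cases i) simp_all
  finally show ?thesis .
qed

lemma diagonal_convolution_binomial:
  assumes "q \<ge> 1"
  shows "diagonal_convolution (\<lambda>a. (-1) ^ a * of_nat (q choose a)) q
           (\<lambda>i j. if i = j then of_nat ((q - 1 + i) choose i) else 0)
       = (\<lambda>i j. if i = 0 \<and> j = 0 then 1 else (0::complex))"
proof (intro ext)
  fix i j
  show "diagonal_convolution (\<lambda>a. (-1) ^ a * of_nat (q choose a)) q
           (\<lambda>i j. if i = j then of_nat ((q - 1 + i) choose i) else 0) i j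
       = (if i = 0 \<and> j = 0 then 1 else (0::complex))"
  proof (cases "i = j")
    case True
    have "diagonal_convolution (\<lambda>a. (-1) ^ a * of_nat (q choose a)) q
           (\<lambda>i j. if i = j then of_nat ((q - 1 + i) choose i) else 0) j j
        = (\<Sum>a\<le>q. (-1) ^ a * of_nat (q choose a) *
            (if a \<le> j then of_nat ((q - 1 + (j - a)) choose (j - a)) else 0) :: complex)"
      by (simp add: diagonal_convolution_def cong: if_cong)
    then show ?thesis
      using alternating_binomial_convolution[OF assms, of j] by (simp only: True conj_absorb)
  next
    case False
    then show ?thesis by (auto simp: diagonal_convolution_def intro!: sum.neutral)
  qed
qed

section \<open>Diagonal matrices factoring through a small set\<close>

lemma diagonal_factorization_card_le:
  fixes \<alpha> \<beta> :: "'a \<Rightarrow> nat \<Rightarrow> 'b::idom"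
  assumes I: "finite I"
    and factor: "\<And>k l. k < K \<Longrightarrow> l < K \<Longrightarrow> (\<Sum>x\<in>I. \<alpha> x k * \<beta> x l) = (if k = l then d k else 0)"
    and nonzero: "\<And>k. k < K \<Longrightarrow> d k \<noteq> 0"
  shows "K \<le> card I"
proof (rule ccontr)
  define M where "M = card I"
  assume "\<not> K \<le> card I"
  then have MK: "M < K" by (simp add: M_def)
  obtain h where h: "bij_betw h {0..<M} I"
    using ex_bij_betw_nat_finite[OF I] by (auto simp: M_def)
  define A where "A = mat K K (\<lambda>(k, m). if m < M then \<alpha> (h m) k else 0)"
  define B where "B = mat K K (\<lambda>(m, l). if m < M then \<beta> (h m) l else 0)"
  define D where "D = mat K K (\<lambda>(k, l). if k = l then d k else 0)"
  have carrier: "A \<in> carrier_mat K K" "B \<in> carrier_mat K K" "D \<in> carrier_mat K K"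
    by (auto simp: A_def B_def D_def)
  have "A * B = D"
  proof (rule eq_matI)
    fix k l assume "k < dim_row D" "l < dim_col D"
    then have kl: "k < K" "l < K" by (auto simp: D_def)
    have "(A * B) $$ (k, l) = (\<Sum>m\<in>{0..<K}. if m < M then \<alpha> (h m) k * \<beta> (h m) l else 0)"
      using kl by (auto simp: A_def B_def scalar_prod_def intro!: sum.cong)
    also have "\<dots> = (\<Sum>m\<in>{0..<M}. \<alpha> (h m) k * \<beta> (h m) l)"
      using MK by (intro sum.mono_neutral_cong_right) auto
    also have "\<dots> = (\<Sum>x\<in>I. \<alpha> x k * \<beta> x l)"
      by (rule sum.reindex_bij_betw[OF h])
    also have "\<dots> = D $$ (k, l)" using factor kl by (simp add: D_def)
    finally show "(A * B) $$ (k, l) = D $$ (k, l)" .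
  qed (auto simp: A_def B_def D_def)
  txt \<open>Row \<open>M\<close> of \<open>B\<close> vanishes.\<close>
  have "multrow M 0 B = B"
    by (rule eq_matI) (auto simp: B_def)
  then have "det B = 0" using det_multrow[OF MK carrier(2), of 0] by simp
  then have "det D = 0" using det_mult[OF carrier(1,2)] \<open>A * B = D\<close> by simp
  moreover have "det D = (\<Prod>k=0..<K. d k)"
    using det_upper_triangular[OF _ carrier(3)]
    by (simp add: prod_list_diag_prod D_def upper_triangular_def)
  moreover have "(\<Prod>k=0..<K. d k) \<noteq> 0" using nonzero by simp
  ultimately show False by simp
qed

section \<open>The function \<open>(1 - |z|\<^sup>2)\<^sup>-\<^sup>q\<close> is not a finite sesquiholomorphic sum\<close>

lemma of_real_one_minus_norm_sq_power:
  "complex_of_real (1 - (norm z)\<^sup>2) ^ q = (\<Sum>a\<le>q. (-1) ^ a * of_nat (q choose a) * z ^ a * cnj (z ^ a))"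
proof -
  have "complex_of_real (1 - (norm z)\<^sup>2) ^ q = (- (z * cnj z) + 1) ^ q"
    using complex_norm_square[of z] by simp
  also have "\<dots> = (\<Sum>a\<le>q. of_nat (q choose a) * (- (z * cnj z)) ^ a * 1 ^ (q - a))"
    by (rule binomial_ring)
  finally show ?thesis
    by (simp add: power_minus' power_mult_distrib mult_ac)
qed

lemma sesqui_sum_times_one_minus_norm_sq_power:
  fixes A B :: "'a \<Rightarrow> complex \<Rightarrow> complex"
  assumes "norm z < 1"
    and sum_eq: "(\<Sum>x\<in>I. A x z * cnj (B x z)) = 1 / complex_of_real (1 - (norm z)\<^sup>2) ^ q"
  shows "(\<Sum>(x, a)\<in>I \<times> {..q}. ((-1) ^ a * of_nat (q choose a) * z ^ a * A x z) * cnj (z ^ a * B x z)) = 1"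
proof -
  have "1 - (norm z)\<^sup>2 \<noteq> 0"
    using assms(1) power_less_one_iff[of "norm z" 2] by simp
  then have nonzero: "complex_of_real (1 - (norm z)\<^sup>2) \<noteq> 0"
    by (simp only: of_real_eq_0_iff not_False_eq_True)
  have "(\<Sum>(x, a)\<in>I \<times> {..q}. ((-1) ^ a * of_nat (q choose a) * z ^ a * A x z) * cnj (z ^ a * B x z))
      = (\<Sum>x\<in>I. A x z * cnj (B x z)) * (\<Sum>a\<le>q. (-1) ^ a * of_nat (q choose a) * z ^ a * cnj (z ^ a))"
    by (simp add: sum_product sum.cartesian_product mult_ac)
  also have "\<dots> = 1 / complex_of_real (1 - (norm z)\<^sup>2) ^ q * complex_of_real (1 - (norm z)\<^sup>2) ^ q"
    using sum_eq of_real_one_minus_norm_sq_power[symmetric] by (rule arg_cong2[where f = "(*)"])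
  also have "\<dots> = 1"
    by (simp only: times_divide_eq_left mult_1 divide_self[OF power_not_zero[OF nonzero]])
  finally show ?thesis .
qed

lemma fps_expansion_cmult_monomial_nth:
  assumes "f holomorphic_on S" "open S" "0 \<in> S"
  shows "fps_nth (fps_expansion (\<lambda>z. c * z ^ a * f z) 0) n
       = (if n < a then 0 else c * fps_nth (fps_expansion f 0) (n - a))"
proof -
  have expansion: "(\<lambda>z. c * z ^ a * f z) has_fps_expansion fps_const c * fps_X ^ a * fps_expansion f 0"
    using assms by (intro has_fps_expansion_mult has_fps_expansion_cmult_left
        has_fps_expansion_fps_X_power has_fps_expansion_fps_expansion)
  have "fps_nth (fps_expansion (\<lambda>z. c * z ^ a * f z) 0) n = (deriv ^^ n) (\<lambda>z. c * z ^ a * f z) 0 / fact n"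
    by (simp add: fps_expansion_def)
  also have "\<dots> = fps_nth (fps_const c * (fps_X ^ a * fps_expansion f 0)) n"
    using fps_nth_fps_expansion[OF expansion, of n] by (simp add: mult.assoc)
  finally show ?thesis by (simp add: fps_X_power_mult_nth)
qed

lemma fps_coeff_sums_monomial_shift:
  fixes A B :: "'a \<Rightarrow> complex \<Rightarrow> complex"
  assumes S: "open S" "0 \<in> S" and holo: "\<And>x. x \<in> I \<Longrightarrow> A x holomorphic_on S \<and> B x holomorphic_on S"
  shows "(\<Sum>(x, a)\<in>I \<times> {..q}. fps_nth (fps_expansion (\<lambda>z. k a * z ^ a * A x z) 0) i
            * cnj (fps_nth (fps_expansion (\<lambda>z. z ^ a * B x z) 0) j))
       = diagonal_convolution k q
           (\<lambda>i j. \<Sum>x\<in>I. fps_nth (fps_expansion (A x) 0) i * cnj (fps_nth (fps_expansion (B x) 0) j)) i j"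
proof -
  have summand: "fps_nth (fps_expansion (\<lambda>z. k a * z ^ a * A x z) 0) i
        * cnj (fps_nth (fps_expansion (\<lambda>z. z ^ a * B x z) 0) j)
      = k a * (if a \<le> i \<and> a \<le> j then fps_nth (fps_expansion (A x) 0) (i - a)
              * cnj (fps_nth (fps_expansion (B x) 0) (j - a)) else 0)" if "x \<in> I" for x a
    using fps_expansion_cmult_monomial_nth[OF conjunct1[OF holo[OF that]] S, of "k a" a i]
      fps_expansion_cmult_monomial_nth[where c = 1, OF conjunct2[OF holo[OF that]] S, of a j]
    by (cases "a \<le> i"; cases "a \<le> j") simp_all
  have "(\<Sum>(x, a)\<in>I \<times> {..q}. fps_nth (fps_expansion (\<lambda>z. k a * z ^ a * A x z) 0) i
            * cnj (fps_nth (fps_expansion (\<lambda>z. z ^ a * B x z) 0) j))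
      = (\<Sum>x\<in>I. \<Sum>a\<le>q. k a * (if a \<le> i \<and> a \<le> j then fps_nth (fps_expansion (A x) 0) (i - a)
              * cnj (fps_nth (fps_expansion (B x) 0) (j - a)) else 0))"
    unfolding sum.cartesian_product' prod.case by (intro sum.cong[OF refl]) (erule summand)
  also have "\<dots> = diagonal_convolution k q
           (\<lambda>i j. \<Sum>x\<in>I. fps_nth (fps_expansion (A x) 0) i * cnj (fps_nth (fps_expansion (B x) 0) j)) i j"
    by (subst sum.swap) (auto simp: diagonal_convolution_def sum_distrib_left intro!: sum.cong)
  finally show ?thesis .
qed

lemma inverse_power_sesqui_sum_fps_coeffs:
  fixes A B :: "'a \<Rightarrow> complex \<Rightarrow> complex"
  assumes S: "open S" "0 \<in> S" "S \<subseteq> ball 0 1" and "q \<ge> 1"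
    and holo: "\<And>x. x \<in> I \<Longrightarrow> A x holomorphic_on S \<and> B x holomorphic_on S"
    and sum_eq: "\<And>z. z \<in> S \<Longrightarrow> (\<Sum>x\<in>I. A x z * cnj (B x z)) = 1 / complex_of_real (1 - (norm z)\<^sup>2) ^ q"
  shows "(\<Sum>x\<in>I. fps_nth (fps_expansion (A x) 0) i * cnj (fps_nth (fps_expansion (B x) 0) j))
       = (if i = j then of_nat ((q - 1 + i) choose i) else 0)"
proof -
  define k :: "nat \<Rightarrow> complex" where "k a = (-1) ^ a * of_nat (q choose a)" for a
  define C where "C = (\<lambda>i j. \<Sum>x\<in>I. fps_nth (fps_expansion (A x) 0) i * cnj (fps_nth (fps_expansion (B x) 0) j))"
  define F where "F = (\<lambda>(x, a) z. k a * z ^ a * A x z)"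
  define G where "G = (\<lambda>(x, a) z. z ^ a * B x z)"
  have holo_FG: "F y holomorphic_on S \<and> G y holomorphic_on S" if "y \<in> I \<times> {..q}" for y
    using that holo by (auto simp: F_def G_def intro!: holomorphic_intros)
  have const_FG: "(\<Sum>y\<in>I \<times> {..q}. F y z * cnj (G y z)) = 1" if "z \<in> S" for z
    using sesqui_sum_times_one_minus_norm_sq_power[where A = A and B = B and I = I, OF _ sum_eq[OF that]]
      that S(3) by (auto simp: F_def G_def k_def case_prod_unfold)
  have "diagonal_convolution k q C i j = (if i = 0 \<and> j = 0 then 1 else 0)" for i j
    using sesqui_sum_const_imp_fps_coeff_sums[OF S(1,2) holo_FG const_FG, of i j]
      fps_coeff_sums_monomial_shift[where I = I and A = A and B = B, OF S(1,2) holo,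
        where k = k and q = q and i = i and j = j]
    by (simp add: F_def G_def C_def case_prod_unfold)
  then have "diagonal_convolution k q C = (\<lambda>i j. if i = 0 \<and> j = 0 then 1 else 0)"
    by (simp add: fun_eq_iff)
  also have "\<dots> = diagonal_convolution k q (\<lambda>i j. if i = j then of_nat ((q - 1 + i) choose i) else 0)"
    unfolding k_def diagonal_convolution_binomial[OF \<open>q \<ge> 1\<close>] ..
  finally have "C = (\<lambda>i j. if i = j then of_nat ((q - 1 + i) choose i) else 0)"
    by (rule diagonal_convolution_inject[rotated]) (simp add: k_def)
  then show ?thesis by (simp add: C_def fun_eq_iff)
qed

lemma inverse_power_not_finite_sesqui_sum:
  fixes A B :: "'a \<Rightarrow> complex \<Rightarrow> complex"
  assumes "open S" "0 \<in> S" "S \<subseteq> ball 0 1" "q \<ge> 1" "finite I"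
    and "\<And>x. x \<in> I \<Longrightarrow> A x holomorphic_on S \<and> B x holomorphic_on S"
    and "\<And>z. z \<in> S \<Longrightarrow> (\<Sum>x\<in>I. A x z * cnj (B x z)) = 1 / complex_of_real (1 - (norm z)\<^sup>2) ^ q"
  shows False
proof -
  have "card I + 1 \<le> card I"
    using assms(5) inverse_power_sesqui_sum_fps_coeffs[OF assms(1-4,6,7)]
    by (intro diagonal_factorization_card_le[where \<alpha> = "\<lambda>x i. fps_nth (fps_expansion (A x) 0) i"
          and \<beta> = "\<lambda>x j. cnj (fps_nth (fps_expansion (B x) 0) j)"
          and d = "\<lambda>i. of_nat ((q - 1 + i) choose i)"]) auto
  then show False by simp
qed

section \<open>Restriction to a coordinate axis\<close>

lemma norm_axis: "norm (axis i x) = norm (x :: 'a::real_inner)"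
  by (simp add: norm_eq_sqrt_inner inner_axis_axis)

lemma bounded_linear_axis: "bounded_linear (axis i :: 'a::real_inner \<Rightarrow> 'a ^ 'n)"
proof (rule bounded_linear_intro[where K = 1])
  show "axis i (x + y) = axis i x + axis i y" for x y :: 'a
    by (simp add: axis_def Finite_Cartesian_Product.vec_eq_iff)
  show "axis i (r *\<^sub>R x) = r *\<^sub>R axis i x" for r and x :: 'a
    by (simp add: axis_def Finite_Cartesian_Product.vec_eq_iff)
  show "norm (axis i x :: 'a ^ 'n) \<le> norm x * 1" for x :: 'a
    by (simp add: norm_axis)
qed

lemma holomorphic_several_axis_slice:
  assumes "holomorphic_several f X"
  shows "(\<lambda>z. f (axis s z)) holomorphic_on axis s -` X"
  unfolding holomorphic_on_def field_differentiable_def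
proof
  fix z assume "z \<in> axis s -` X"
  then obtain L where L: "(f has_derivative L) (at (axis s z))" and linear: "\<forall>c v. L (c *s v) = c * L v"
    using assms unfolding holomorphic_several_def by blast
  have "((\<lambda>z. f (axis s z)) has_derivative (\<lambda>v. L (axis s v))) (at z within axis s -` X)"
    by (rule has_derivative_compose[OF bounded_linear.has_derivative[OF bounded_linear_axis has_derivative_ident] L])
  moreover have "(\<lambda>v. L (axis s v)) = (*) (L (axis s 1))"
  proof
    fix v
    have "axis s v = v *s (axis s 1 :: complex ^ 'a)"
      by (simp add: axis_def Finite_Cartesian_Product.vec_eq_iff)
    then show "L (axis s v) = L (axis s 1) * v"
      using linear by (simp add: mult.commute)
  qed
  ultimately show "\<exists>f'. ((\<lambda>z. f (axis s z)) has_field_derivative f') (at z within axis s -` X)"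
    unfolding has_field_derivative_def by auto
qed

lemma umehara_algebra_axis_slice:
  assumes "h \<in> umehara_algebra X"
  obtains I :: "(nat \<times> bool) set" and A B :: "nat \<times> bool \<Rightarrow> complex \<Rightarrow> complex"
  where "finite I"
    and "\<And>x. x \<in> I \<Longrightarrow> A x holomorphic_on axis s -` X \<and> B x holomorphic_on axis s -` X"
    and "\<And>z. axis s z \<in> X \<Longrightarrow> h (axis s z) = (\<Sum>x\<in>I. A x z * cnj (B x z))"
proof -
  obtain n and c :: "nat \<Rightarrow> real" and f g where
    holo: "\<forall>k<n. holomorphic_several (f k) X \<and> holomorphic_several (g k) X"
    and h: "\<forall>w\<in>X. h w = (\<Sum>k<n. of_real (c k) * (f k w * cnj (g k w) + g k w * cnj (f k w)))"
    using assms unfolding umehara_algebra_def by blast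
  define A where "A = (\<lambda>(k, b) z. of_real (c k) * (if b then f k (axis s z) else g k (axis s z)))"
  define B where "B = (\<lambda>(k, b) z. if b then g k (axis s z) else f k (axis s z))"
  show thesis
  proof
    show "finite ({..<n} \<times> (UNIV :: bool set))" by simp
  next
    fix x assume "x \<in> {..<n} \<times> (UNIV :: bool set)"
    then obtain k b where x: "x = (k, b)" and "k < n" by auto
    then have "(\<lambda>z. f k (axis s z)) holomorphic_on axis s -` X" "(\<lambda>z. g k (axis s z)) holomorphic_on axis s -` X"
      using holo holomorphic_several_axis_slice by blast+
    then show "A x holomorphic_on axis s -` X \<and> B x holomorphic_on axis s -` X"
      unfolding x A_def B_def by (cases b) (auto intro: holomorphic_intros)
  next
    fix z assume "axis s z \<in> X"
    then show "h (axis s z) = (\<Sum>x\<in>{..<n} \<times> UNIV. A x z * cnj (B x z))"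
      using h by (simp add: sum.cartesian_product' UNIV_bool A_def B_def algebra_simps)
  qed
qed

lemma det_on_diagonal:
  assumes "finite P" and "\<And>i j. i \<noteq> j \<Longrightarrow> M i j = 0"
  shows "det_on P M = (\<Prod>i\<in>P. M i i)"
proof -
  have "det_on P M = (\<Sum>\<pi>\<in>{id}. of_int (sign \<pi>) * (\<Prod>i\<in>P. M i (\<pi> i)))"
    unfolding det_on_def
  proof (rule sum.mono_neutral_right)
    show "finite {\<pi>. \<pi> permutes P}" using assms(1) by (rule finite_permutations)
    show "{id} \<subseteq> {\<pi>. \<pi> permutes P}" by simp
    show "\<forall>\<pi>\<in>{\<pi>. \<pi> permutes P} - {id}. of_int (sign \<pi>) * (\<Prod>i\<in>P. M i (\<pi> i)) = 0"
    proof
      fix \<pi> assume "\<pi> \<in> {\<pi>. \<pi> permutes P} - {id}"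
      then have "\<pi> permutes P" "\<pi> \<noteq> id" by auto
      then obtain i where "\<pi> i \<noteq> i" and "i \<in> P" by (metis eq_id_iff permutes_not_in)
      then have "(\<Prod>i\<in>P. M i (\<pi> i)) = 0" using assms by (metis prod_zero)
      then show "of_int (sign \<pi>) * (\<Prod>i\<in>P. M i (\<pi> i)) = 0" by simp
    qed
  qed
  then show ?thesis by simp
qed

lemma phi_axis:
  fixes P :: "'m::finite set"
  assumes "s \<in> P" and "norm z < 1"
  shows "phi P (axis s z) = 1 / complex_of_real (1 - (norm z)\<^sup>2) ^ (card P + 1)"
proof -
  define r where "r = complex_of_real (1 - (norm z)\<^sup>2)"
  have "1 - (norm z)\<^sup>2 \<noteq> 0"
    using assms(2) power_less_one_iff[of "norm z" 2] by simp
  then have "r \<noteq> 0"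
    unfolding r_def by (simp only: of_real_eq_0_iff not_False_eq_True)
  have "det_on P (\<lambda>u t. r * (if u = t then 1 else 0) + cnj (vec_nth (axis s z) u) * vec_nth (axis s z) t)
      = (\<Prod>u\<in>P. if u = s then 1 else r)"
    by (subst det_on_diagonal) (auto simp: axis_def r_def mult.commute simp flip: complex_norm_square intro!: prod.cong)
  also have "\<dots> = r ^ (card P - 1)"
    using assms(1) by (simp add: prod.If_cases Diff_eq[symmetric] card_Diff_singleton)
  finally have "phi P (axis s z) = 1 / r ^ (2 * card P) * r ^ (card P - 1)"
    by (simp add: phi_def Let_def norm_axis r_def)
  also have "\<dots> = 1 / r ^ (card P + 1)"
  proof -
    have "card P \<ge> 1" using assms(1) card_gt_0_iff[of P] by fastforce
    then have "2 * card P = (card P + 1) + (card P - 1)"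
      by simp
    then have "r ^ (2 * card P) = r ^ (card P + 1) * r ^ (card P - 1)"
      by (simp only: power_add)
    then show ?thesis using \<open>r \<noteq> 0\<close> by simp
  qed
  finally show ?thesis by (simp add: r_def)
qed

theorem lemma3p5:
  fixes P :: "'m::finite set" and p :: nat
  assumes "1 \<le> p" and "p \<le> CARD('m)" and "card P = p"
  shows "phi P \<notin> umehara_algebra (ball (0::complex^'m) 1)"
proof
  assume "phi P \<in> umehara_algebra (ball (0::complex^'m) 1)"
  obtain s where s: "s \<in> P"
    using assms(1,3) by fastforce
  obtain I :: "(nat \<times> bool) set" and A B where "finite I"
    and holo: "\<And>x. x \<in> I \<Longrightarrow> A x holomorphic_on axis s -` ball 0 1 \<and> B x holomorphic_on axis s -` ball 0 1"
    and slice: "\<And>z. axis s z \<in> ball 0 1 \<Longrightarrow> phi P (axis s z) = (\<Sum>x\<in>I. A x z * cnj (B x z))"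
    using umehara_algebra_axis_slice[OF \<open>phi P \<in> _\<close>] by blast
  have disc: "axis s -` ball 0 1 = ball (0::complex) 1"
    by (auto simp: norm_axis)
  show False
  proof (rule inverse_power_not_finite_sesqui_sum)
    show "A x holomorphic_on ball 0 1 \<and> B x holomorphic_on ball 0 1" if "x \<in> I" for x
      using holo[OF that] by (simp only: disc)
    show "(\<Sum>x\<in>I. A x z * cnj (B x z)) = 1 / complex_of_real (1 - (norm z)\<^sup>2) ^ (p + 1)"
      if "z \<in> ball 0 1" for z
      using slice[of z] phi_axis[OF s, of z] that assms(3) by (simp add: norm_axis)
  qed (use \<open>finite I\<close> in auto)
qed

end
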